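(* Let $n\geq 5$ and let $T$ be an $n$-tournament. Then $T$ is $(n-2)$-spectrally monomorphic if and only if $T$ is transitive or doubly regular. Moreover, if $T$ is doubly regular, then the common characteristic polynomial of the adjacency matrices of all the $(n-2)$-vertex subtournaments of $T$ is \[ \left(z^{2}+z+\tfrac{n+1}{4}\right)^{\frac{n-5}{2}}\left(z^{3}-\tfrac{n-5}{2}z^{2}-\tfrac{n-5}{2}z-\tfrac{n-3}{4}\right). \]
   Context: An $n$-tournament is a digraph on $n$ vertices in which every pair of distinct vertices is joined by exactly one arc; if the arc goes from $u$ to $v$, $u$ dominates $v$. With respect to an ordering $v_1,\dots,v_n$ of the vertices, the adjacency matrix $A=(a_{ij})$ has $a_{ij}=1$ if $v_i$ dominates $v_j$ and $0$ otherwise. The characteristic polynomial of a square matrix $M$ is $P_M(z)=\det(zI-M)$. A square matrix is $k$-spectrally monomorphic if all its $k\times k$ principal submatrices have the same characteristic polynomial; a tournament is $k$-spectrally monomorphic if its adjacency matrix is (equivalently, all its $k$-vertex subtournaments have adjacency matrices with the same characteristic polynomial). A tournament is transitive if whenever $u$ dominates $v$ and $v$ dominates $w$, then $u$ dominates $w$. A tournament is doubly regular if the number $|N^+(x)\cap N^+(y)|$ of vertices dominated by both $x$ and $y$ is the same for all pairs of distinct vertices $x,y$, where $N^+(x)$ is the set of vertices dominated by $x$. *)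

theory Defs
  imports "Jordan_Normal_Form.Char_Poly" "Jordan_Normal_Form.DL_Submatrix"
begin

text \<open>An n-tournament on the vertex set {0..<n} (vertex i is v_(i+1));
  T u v means u dominates v.\<close>
definition tournament :: "nat \<Rightarrow> (nat \<Rightarrow> nat \<Rightarrow> bool) \<Rightarrow> bool" where
  "tournament n T \<longleftrightarrow> (\<forall>u<n. \<not> T u u) \<and>
     (\<forall>u<n. \<forall>v<n. u \<noteq> v \<longrightarrow> (T u v \<or> T v u) \<and> \<not> (T u v \<and> T v u))"

definition adj_mat :: "nat \<Rightarrow> (nat \<Rightarrow> nat \<Rightarrow> bool) \<Rightarrow> real mat" where
  "adj_mat n T = mat n n (\<lambda>(i,j). if T i j then 1 else 0)"

definition principal_submatrix :: "'a mat \<Rightarrow> nat set \<Rightarrow> 'a mat" where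
  "principal_submatrix A I = submatrix A I I"

definition spectrally_monomorphic :: "nat \<Rightarrow> 'a :: comm_ring_1 mat \<Rightarrow> bool" where
  "spectrally_monomorphic k A \<longleftrightarrow>
     (\<forall>I J. I \<subseteq> {0..<dim_row A} \<and> J \<subseteq> {0..<dim_row A} \<and> card I = k \<and> card J = k \<longrightarrow>
        char_poly (principal_submatrix A I) = char_poly (principal_submatrix A J))"

definition transitive_tournament :: "nat \<Rightarrow> (nat \<Rightarrow> nat \<Rightarrow> bool) \<Rightarrow> bool" where
  "transitive_tournament n T \<longleftrightarrow>
     (\<forall>u<n. \<forall>v<n. \<forall>w<n. T u v \<and> T v w \<longrightarrow> T u w)"

definition doubly_regular :: "nat \<Rightarrow> (nat \<Rightarrow> nat \<Rightarrow> bool) \<Rightarrow> bool" where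
  "doubly_regular n T \<longleftrightarrow>
     (\<exists>c. \<forall>x<n. \<forall>y<n. x \<noteq> y \<longrightarrow> card {z. z < n \<and> T x z \<and> T y z} = c)"

end

theory Submission
  imports Defs
begin

text \<open>The coefficient of z^(k-3) in the characteristic polynomial of a k-tournament is minus
  the number of its 3-cycles; this follows by induction on k, since the derivative of char_poly A
  is the sum of the characteristic polynomials of the one-vertex deletions. So an
  (n-2)-spectrally monomorphic tournament has the same number of 3-cycles in every
  (n-2)-subtournament. Inclusion-exclusion then shows that every vertex lies on the same number of
  3-cycles and every arc on the same number E of them: E = 0 means transitive, E > 0 means doubly
  regular.

  Conversely, subtournaments of a transitive tournament are transitive, with characteristic
  polynomial z^k. For a doubly regular tournament, A^2 + A + qI = qJ with q = (n+1)/4, so the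
  resolvent (zI - A)^-1 is a combination of I, A and J. Its trace gives a first-order differential
  equation that determines char_poly A, and Jacobi's identity writes each (n-2)-minor of zI - A as
  det (zI - A) times a 2x2 minor of the resolvent.\<close>

definition skip :: "nat \<Rightarrow> nat \<Rightarrow> nat" where
  "skip x i = (if i < x then i else Suc i)"

lemma inj_skip: "inj (skip x)"
  unfolding skip_def inj_def by auto

lemma skip_less: "i < N \<Longrightarrow> skip x i < Suc N"
  unfolding skip_def by auto

lemma image_skip: assumes "x \<le> N" shows "skip x ` {0..<N} = {0..<Suc N} - {x}"
proof
  show "skip x ` {0..<N} \<subseteq> {0..<Suc N} - {x}" unfolding skip_def by auto
  show "{0..<Suc N} - {x} \<subseteq> skip x ` {0..<N}"
  proof
    fix i assume i: "i \<in> {0..<Suc N} - {x}"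
    show "i \<in> skip x ` {0..<N}"
    proof (cases "i < x")
      case True then show ?thesis using i assms unfolding skip_def by (intro image_eqI[of _ _ i]) auto
    next
      case False then have "i > 0" "i - 1 \<ge> x" using i by auto
      then show ?thesis using i unfolding skip_def by (intro image_eqI[of _ _ "i - 1"]) auto
    qed
  qed
qed

lemma sum_skip:
  assumes "x \<le> N" shows "(\<Sum>i<N. g (skip x i)) = (\<Sum>i\<in>{0..<Suc N} - {x}. g i)"
proof -
  have "(\<Sum>i\<in>{0..<Suc N} - {x}. g i) = (\<Sum>i\<in>skip x ` {0..<N}. g i)"
    using assms by (simp add: image_skip)
  also have "\<dots> = (\<Sum>i\<in>{0..<N}. g (skip x i))"
    by (rule sum.reindex[unfolded comp_def]) (meson inj_on_subset inj_skip subset_UNIV)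
  finally show ?thesis by (simp add: atLeast0LessThan)
qed

lemma inj_skip2: "inj (\<lambda>i. skip y (skip x i))"
  using inj_skip[of x] inj_skip[of y] unfolding inj_def by blast

lemma image_skip2:
  assumes "x < y" "y < n"
  shows "(\<lambda>i. skip y (skip x i)) ` {0..<n-2} = {0..<n} - {x, y}"
proof -
  have "skip x ` {0..<n-2} = {0..<n-1} - {x}"
    using image_skip[of x "n-2"] assms by (simp add: Suc_diff_Suc numeral_2_eq_2)
  hence "(\<lambda>i. skip y (skip x i)) ` {0..<n-2} = skip y ` ({0..<n-1} - {x})"
    by (simp add: image_image[symmetric])
  also have "\<dots> = skip y ` {0..<n-1} - {skip y x}"
    using image_set_diff[OF inj_skip, of y "{0..<n-1}" "{x}"] by simp
  also have "\<dots> = {0..<n} - {x, y}" using image_skip[of y "n-1"] assms by (auto simp: skip_def)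
  finally show ?thesis .
qed

lemma skip2_less:
  assumes "x < y" "y < n" "i < n - 2" shows "skip y (skip x i) < n"
proof -
  have "skip y (skip x i) \<in> (\<lambda>i. skip y (skip x i)) ` {0..<n-2}" using assms(3) by simp
  thus ?thesis unfolding image_skip2[OF assms(1,2)] by simp
qed

lemma adj_mat_carrier [simp]: "adj_mat n T \<in> carrier_mat n n"
  unfolding adj_mat_def by simp

lemma adj_mat_dim [simp]: "dim_row (adj_mat n T) = n" "dim_col (adj_mat n T) = n"
  unfolding adj_mat_def by simp_all

lemma adj_mat_index [simp]:
  "i < n \<Longrightarrow> j < n \<Longrightarrow> adj_mat n T $$ (i,j) = (if T i j then 1 else 0)"
  unfolding adj_mat_def by simp

lemma mat_delete_adj_mat:
  "mat_delete (adj_mat (Suc N) T) x x = adj_mat N (\<lambda>i j. T (skip x i) (skip x j))"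
  by (rule eq_matI) (auto simp: mat_delete_def skip_def)

lemma mat_delete2_adj_mat:
  assumes "x < y" "y < n"
  shows "mat_delete (mat_delete (adj_mat n T) y y) x x =
           adj_mat (n-2) (\<lambda>i j. T (skip y (skip x i)) (skip y (skip x j)))"
  using assms by (intro eq_matI) (auto simp: mat_delete_def skip_def)

lemma tournament_reindex:
  assumes "tournament n T" "inj f" "\<And>i. i < k \<Longrightarrow> f i < n"
  shows "tournament k (\<lambda>i j. T (f i) (f j))"
  using assms unfolding tournament_def inj_def by metis

lemma transitive_tournament_reindex:
  assumes "transitive_tournament n T" "\<And>i. i < k \<Longrightarrow> f i < n"
  shows "transitive_tournament k (\<lambda>i j. T (f i) (f j))"
  using assms unfolding transitive_tournament_def by blast

lemma tournament_irrefl: "tournament n T \<Longrightarrow> u < n \<Longrightarrow> \<not> T u u"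
  unfolding tournament_def by blast

lemma tournament_converse:
  "tournament n T \<Longrightarrow> u < n \<Longrightarrow> v < n \<Longrightarrow> u \<noteq> v \<Longrightarrow> T v u \<longleftrightarrow> \<not> T u v"
  unfolding tournament_def by blast

lemma real_card_eq_sum_of_bool: "real (card {z. z < (n::nat) \<and> P z}) = (\<Sum>z<n. of_bool (P z))"
proof -
  have "(\<Sum>z<n. (of_bool (P z) :: real)) = of_nat (card ({..<n} \<inter> {z. P z}))"
    by (rule sum_of_bool_eq) auto
  moreover have "{..<n} \<inter> {z. P z} = {z. z < n \<and> P z}" by auto
  ultimately show ?thesis by simp
qed

section \<open>Counting 3-cycles\<close>

definition cyc3 :: "(nat \<Rightarrow> nat \<Rightarrow> bool) \<Rightarrow> nat \<Rightarrow> nat \<Rightarrow> nat \<Rightarrow> real" where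
  "cyc3 T a b c = of_bool (T a b \<and> T b c \<and> T c a)"

text \<open>Cycles are counted as ordered triples, so \<open>cycles T S\<close> is three times the number of
  3-cycles in S.\<close>

definition cycles :: "(nat \<Rightarrow> nat \<Rightarrow> bool) \<Rightarrow> nat set \<Rightarrow> real" where
  "cycles T S = (\<Sum>a\<in>S. \<Sum>b\<in>S. \<Sum>c\<in>S. cyc3 T a b c)"

definition cycles_at :: "(nat \<Rightarrow> nat \<Rightarrow> bool) \<Rightarrow> nat set \<Rightarrow> nat \<Rightarrow> real" where
  "cycles_at T S x = (\<Sum>b\<in>S. \<Sum>c\<in>S. cyc3 T x b c)"

definition cycles_through :: "(nat \<Rightarrow> nat \<Rightarrow> bool) \<Rightarrow> nat set \<Rightarrow> nat \<Rightarrow> nat \<Rightarrow> real" where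
  "cycles_through T S x y = (\<Sum>c\<in>S. cyc3 T x y c + cyc3 T x c y)"

lemma cyc3_rotate: "cyc3 T a b c = cyc3 T b c a"
  unfolding cyc3_def by auto

lemma cyc3_nonneg: "cyc3 T a b c \<ge> 0"
  unfolding cyc3_def by simp

lemma cyc3_degenerate:
  assumes "\<not> T a a" shows "cyc3 T a a c = 0" "cyc3 T a c a = 0" "cyc3 T c a a = 0"
  using assms unfolding cyc3_def by auto

lemma cycles_reindex:
  assumes "inj_on f S" shows "cycles (\<lambda>i j. T (f i) (f j)) S = cycles T (f ` S)"
  unfolding cycles_def cyc3_def using assms by (simp add: sum.reindex)

lemma cycles_remove:
  assumes S: "finite S" "x \<in> S" and irr: "\<forall>a\<in>S. \<not> T a a"
  shows "cycles T S = cycles T (S - {x}) + 3 * cycles_at T S x"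
proof -
  let ?S = "S - {x}"
  have "cycles T S = cycles_at T S x + (\<Sum>a\<in>?S. \<Sum>b\<in>S. \<Sum>c\<in>S. cyc3 T a b c)"
    unfolding cycles_def cycles_at_def by (rule sum.remove[OF S])
  also have "(\<Sum>a\<in>?S. \<Sum>b\<in>S. \<Sum>c\<in>S. cyc3 T a b c) =
     (\<Sum>a\<in>?S. \<Sum>c\<in>S. cyc3 T a x c) + (\<Sum>a\<in>?S. \<Sum>b\<in>?S. \<Sum>c\<in>S. cyc3 T a b c)"
    by (subst sum.distrib[symmetric], rule sum.cong[OF refl], rule sum.remove[OF S])
  also have "(\<Sum>a\<in>?S. \<Sum>b\<in>?S. \<Sum>c\<in>S. cyc3 T a b c) =
     (\<Sum>a\<in>?S. \<Sum>b\<in>?S. cyc3 T a b x) + cycles T ?S"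
    unfolding cycles_def
    by (subst sum.distrib[symmetric], rule sum.cong[OF refl], subst sum.distrib[symmetric],
        rule sum.cong[OF refl], rule sum.remove[OF S])
  also have "(\<Sum>a\<in>?S. \<Sum>c\<in>S. cyc3 T a x c) = (\<Sum>a\<in>S. \<Sum>c\<in>S. cyc3 T a x c)"
    using S irr by (subst (2) sum.remove[OF S]) (simp add: cyc3_degenerate)
  also have "\<dots> = (\<Sum>a\<in>S. \<Sum>c\<in>S. cyc3 T x c a)" by (simp add: cyc3_rotate[of T _ x])
  also have "\<dots> = cycles_at T S x" unfolding cycles_at_def by (rule sum.swap)
  also have "(\<Sum>a\<in>?S. \<Sum>b\<in>?S. cyc3 T a b x) = (\<Sum>a\<in>S. \<Sum>b\<in>S. cyc3 T a b x)"
  proof -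
    have "(\<Sum>a\<in>S. \<Sum>b\<in>S. cyc3 T a b x) = (\<Sum>a\<in>S. \<Sum>b\<in>?S. cyc3 T a b x)"
      using S irr by (intro sum.cong[OF refl]) (subst sum.remove[OF S], simp_all add: cyc3_degenerate)
    also have "\<dots> = (\<Sum>a\<in>?S. \<Sum>b\<in>?S. cyc3 T a b x)"
      using S irr by (subst sum.remove[OF S]) (simp add: cyc3_degenerate)
    finally show ?thesis by simp
  qed
  also have "\<dots> = cycles_at T S x"
    unfolding cycles_at_def by (intro sum.cong[OF refl]) (metis cyc3_rotate)
  finally show ?thesis by simp
qed

lemma sum_cycles_at: "(\<Sum>x\<in>S. cycles_at T S x) = cycles T S"
  unfolding cycles_at_def cycles_def by simp

lemma cycles_at_remove:
  assumes S: "finite S" "y \<in> S" "x \<noteq> y" and irr: "\<forall>a\<in>S. \<not> T a a"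
  shows "cycles_at T S x = cycles_at T (S - {y}) x + cycles_through T S x y"
proof -
  let ?S = "S - {y}"
  have "cycles_at T S x = (\<Sum>c\<in>S. cyc3 T x y c) + (\<Sum>b\<in>?S. \<Sum>c\<in>S. cyc3 T x b c)"
    unfolding cycles_at_def by (rule sum.remove[OF S(1,2)])
  also have "(\<Sum>b\<in>?S. \<Sum>c\<in>S. cyc3 T x b c) = (\<Sum>b\<in>?S. cyc3 T x b y) + cycles_at T ?S x"
    unfolding cycles_at_def
    by (subst sum.distrib[symmetric], rule sum.cong[OF refl], rule sum.remove[OF S(1,2)])
  also have "(\<Sum>b\<in>?S. cyc3 T x b y) = (\<Sum>b\<in>S. cyc3 T x b y)"
    using S irr sum.remove[OF S(1,2), of "\<lambda>b. cyc3 T x b y"] by (simp add: cyc3_degenerate)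
  finally show ?thesis unfolding cycles_through_def sum.distrib by simp
qed

lemma cycles_through_self: "\<not> T x x \<Longrightarrow> cycles_through T S x x = 0"
  unfolding cycles_through_def by (simp add: cyc3_degenerate)

lemma sum_cycles_through: "(\<Sum>y\<in>S. cycles_through T S y x) = 2 * cycles_at T S x"
proof -
  have "(\<Sum>y\<in>S. cycles_through T S y x) = (\<Sum>y\<in>S. \<Sum>c\<in>S. cyc3 T x c y + cyc3 T x y c)"
    unfolding cycles_through_def by (intro sum.cong[OF refl]) (metis cyc3_rotate)
  also have "\<dots> = (\<Sum>y\<in>S. \<Sum>c\<in>S. cyc3 T x c y) + cycles_at T S x"
    unfolding cycles_at_def by (simp add: sum.distrib)
  also have "(\<Sum>y\<in>S. \<Sum>c\<in>S. cyc3 T x c y) = cycles_at T S x"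
    unfolding cycles_at_def by (rule sum.swap)
  finally show ?thesis by simp
qed

lemma cycles_remove2:
  assumes T: "tournament n T" and xy: "x < n" "y < n" "x \<noteq> y"
  shows "cycles T ({0..<n} - {x, y}) = cycles T {0..<n} - 3 * cycles_at T {0..<n} x
           - 3 * cycles_at T {0..<n} y + 3 * cycles_through T {0..<n} y x"
proof -
  let ?V = "{0..<n}"
  have irr: "\<forall>a\<in>?V. \<not> T a a" using tournament_irrefl[OF T] by auto
  have "cycles T ?V = cycles T (?V - {x}) + 3 * cycles_at T ?V x"
    using cycles_remove[of ?V x T] xy irr by simp
  moreover have "cycles T (?V - {x}) = cycles T (?V - {x} - {y}) + 3 * cycles_at T (?V - {x}) y"
    using cycles_remove[of "?V - {x}" y T] xy irr by simp
  moreover have "cycles_at T ?V y = cycles_at T (?V - {x}) y + cycles_through T ?V y x"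
    using cycles_at_remove[of ?V x y T] xy irr by simp
  moreover have "?V - {x} - {y} = ?V - {x, y}" by auto
  ultimately show ?thesis by simp
qed

lemma sum_cycles_delete:
  assumes T: "tournament (Suc k) T"
  shows "(\<Sum>i<Suc k. cycles (\<lambda>a b. T (skip i a) (skip i b)) {0..<k}) =
           (real k - 2) * cycles T {0..<Suc k}"
proof -
  have irr: "\<forall>a\<in>{0..<Suc k}. \<not> T a a" using tournament_irrefl[OF T] by auto
  have "cycles (\<lambda>a b. T (skip i a) (skip i b)) {0..<k} =
          cycles T {0..<Suc k} - 3 * cycles_at T {0..<Suc k} i" if i: "i < Suc k" for i
  proof -
    have "cycles (\<lambda>a b. T (skip i a) (skip i b)) {0..<k} = cycles T ({0..<Suc k} - {i})"
      using i by (simp add: cycles_reindex inj_on_subset[OF inj_skip] image_skip)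
    also have "\<dots> = cycles T {0..<Suc k} - 3 * cycles_at T {0..<Suc k} i"
      using cycles_remove[of "{0..<Suc k}" i T] i irr by simp
    finally show ?thesis .
  qed
  hence "(\<Sum>i<Suc k. cycles (\<lambda>a b. T (skip i a) (skip i b)) {0..<k}) =
          real (Suc k) * cycles T {0..<Suc k} - 3 * cycles T {0..<Suc k}"
    by (simp add: sum_subtractf sum_distrib_left[symmetric] sum_cycles_at[symmetric]
          atLeast0LessThan del: sum.lessThan_Suc)
  thus ?thesis by (simp add: algebra_simps)
qed

section \<open>The 3-cycle coefficient of the characteristic polynomial\<close>

lemma det_dim_1: assumes "A \<in> carrier_mat 1 1" shows "det A = A $$ (0,0)"
proof -
  have "det A = (\<Sum>i<1. A $$ (i,0) * cofactor A i 0)"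
    by (rule laplace_expansion_column[OF assms]) simp
  moreover have "det (mat_delete A 0 0) = 1"
    using mat_delete_carrier[OF assms, of 0 0] by (simp add: det_def')
  ultimately show ?thesis by (simp add: cofactor_def)
qed

lemma det_dim_2:
  assumes A: "A \<in> carrier_mat 2 2"
  shows "det A = A $$ (0,0) * A $$ (1,1) - A $$ (0,1) * A $$ (1,0)"
proof -
  have "det A = (\<Sum>i<2. A $$ (i,0) * cofactor A i 0)"
    by (rule laplace_expansion_column[OF A]) simp
  also have "\<dots> = A $$ (0,0) * cofactor A 0 0 + A $$ (1,0) * cofactor A 1 0"
    by (simp add: numeral_2_eq_2)
  also have "cofactor A 0 0 = A $$ (1,1)" unfolding cofactor_def
    using A mat_delete_carrier[OF A, of 0 0] by (simp add: det_dim_1 mat_delete_def)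
  also have "cofactor A 1 0 = - A $$ (0,1)" unfolding cofactor_def
    using A mat_delete_carrier[OF A, of 1 0] by (simp add: det_dim_1 mat_delete_def)
  finally show ?thesis by (simp add: algebra_simps)
qed

lemma det_dim_3:
  assumes A: "A \<in> carrier_mat 3 3"
  shows "det A =
     A $$ (0,0) * (A $$ (1,1) * A $$ (2,2) - A $$ (1,2) * A $$ (2,1))
   - A $$ (1,0) * (A $$ (0,1) * A $$ (2,2) - A $$ (0,2) * A $$ (2,1))
   + A $$ (2,0) * (A $$ (0,1) * A $$ (1,2) - A $$ (0,2) * A $$ (1,1))"
proof -
  have "det A = (\<Sum>i<3. A $$ (i,0) * cofactor A i 0)"
    by (rule laplace_expansion_column[OF A]) simp
  also have "\<dots> = A $$ (0,0) * cofactor A 0 0 + A $$ (1,0) * cofactor A 1 0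
                  + A $$ (2,0) * cofactor A 2 0"
    by (simp add: lessThan_nat_numeral)
  also have "cofactor A 0 0 = A $$ (1,1) * A $$ (2,2) - A $$ (1,2) * A $$ (2,1)"
    unfolding cofactor_def using A mat_delete_carrier[OF A, of 0 0]
    by (simp add: det_dim_2 mat_delete_def numeral_2_eq_2)
  also have "cofactor A 1 0 = - (A $$ (0,1) * A $$ (2,2) - A $$ (0,2) * A $$ (2,1))"
    unfolding cofactor_def using A mat_delete_carrier[OF A, of 1 0]
    by (simp add: det_dim_2 mat_delete_def numeral_2_eq_2)
  also have "cofactor A 2 0 = A $$ (0,1) * A $$ (1,2) - A $$ (0,2) * A $$ (1,1)"
    unfolding cofactor_def using A mat_delete_carrier[OF A, of 2 0]
    by (simp add: det_dim_2 mat_delete_def numeral_2_eq_2)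
  finally show ?thesis by (simp add: algebra_simps)
qed

definition charmat :: "nat \<Rightarrow> real \<Rightarrow> real mat \<Rightarrow> real mat" where
  "charmat k z A = mat k k (\<lambda>(i,j). (if i = j then z else 0) - A $$ (i,j))"

lemma charmat_carrier [simp]: "charmat k z A \<in> carrier_mat k k"
  unfolding charmat_def by simp

lemma poly_char_poly_eq_det:
  assumes "A \<in> carrier_mat k k" shows "poly (char_poly A) z = det (charmat k z A)"
proof -
  have "- char_matrix A z = charmat k z A"
    using assms by (intro eq_matI) (auto simp: char_matrix_def charmat_def)
  thus ?thesis using char_poly_matrix[OF assms] by simp
qed

lemma charmat_mat_delete:
  assumes "A \<in> carrier_mat (Suc k) (Suc k)" "x < Suc k"
  shows "charmat k z (mat_delete A x x) = mat_delete (charmat (Suc k) z A) x x"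
  using assms by (intro eq_matI) (auto simp: charmat_def mat_delete_def)

lemma det_charmat_adj_mat_3:
  assumes T: "tournament 3 T"
  shows "det (charmat 3 0 (adj_mat 3 T)) = - cycles T {0..<3} / 3"
proof -
  have irr: "\<not> T 0 0" "\<not> T 1 1" "\<not> T 2 2" using tournament_irrefl[OF T] by auto
  have conv: "T 1 0 \<longleftrightarrow> \<not> T 0 1" "T 2 0 \<longleftrightarrow> \<not> T 0 2" "T 2 1 \<longleftrightarrow> \<not> T 1 2"
    using tournament_converse[OF T, of 0 1] tournament_converse[OF T, of 0 2]
      tournament_converse[OF T, of 1 2] by simp_all
  have rot: "cyc3 T (Suc 0) 2 0 = cyc3 T 0 (Suc 0) 2" "cyc3 T 2 0 (Suc 0) = cyc3 T 0 (Suc 0) 2"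
    "cyc3 T 2 (Suc 0) 0 = cyc3 T 0 2 (Suc 0)" "cyc3 T (Suc 0) 0 2 = cyc3 T 0 2 (Suc 0)"
    by (metis cyc3_rotate)+
  have V: "{0..<3::nat} = {0,1,2}" by auto
  have "cycles T {0..<3} = 3 * (cyc3 T 0 1 2 + cyc3 T 0 2 1)"
    unfolding cycles_def V using irr by (simp add: cyc3_degenerate rot)
  moreover have "det (charmat 3 0 (adj_mat 3 T)) = - (cyc3 T 0 1 2 + cyc3 T 0 2 1)"
    apply (subst det_dim_3[OF charmat_carrier])
    apply (simp add: charmat_def cyc3_def numeral_2_eq_2[symmetric])
    using irr conv by (cases "T 0 1"; cases "T 1 2"; cases "T 0 2") simp_all
  ultimately show ?thesis by simp
qed

lemma coeff_char_poly_adj_mat_cycles: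
  assumes "3 \<le> k" "tournament k T"
  shows "coeff (char_poly (adj_mat k T)) (k - 3) = - cycles T {0..<k} / 3"
  using assms
proof (induction k arbitrary: T rule: nat_induct_at_least)
  case base
  have "coeff (char_poly (adj_mat 3 T)) 0 = det (charmat 3 0 (adj_mat 3 T))"
    by (simp add: poly_0_coeff_0[symmetric] poly_char_poly_eq_det)
  thus ?case using det_charmat_adj_mat_3[OF base] by simp
next
  case (Suc k)
  let ?p = "char_poly (adj_mat (Suc k) T)"
  let ?T = "\<lambda>i a b. T (skip i a) (skip i b)"
  have "pderiv ?p = (\<Sum>i<Suc k. char_poly (adj_mat k (?T i)))"
    by (simp add: pderiv_char_poly[of _ "Suc k"] mat_delete_adj_mat del: sum.lessThan_Suc)
  hence "coeff (pderiv ?p) (k - 3) = (\<Sum>i<Suc k. coeff (char_poly (adj_mat k (?T i))) (k - 3))"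
    by (simp add: coeff_sum del: sum.lessThan_Suc)
  also have "\<dots> = - (\<Sum>i<Suc k. cycles (?T i) {0..<k}) / 3"
    using Suc.IH tournament_reindex[OF Suc.prems inj_skip skip_less]
    by (simp add: sum_negf sum_divide_distrib del: sum.lessThan_Suc)
  also have "\<dots> = - (real k - 2) * cycles T {0..<Suc k} / 3"
    using sum_cycles_delete[OF Suc.prems] by (simp del: sum.lessThan_Suc add: algebra_simps)
  finally have "real (Suc (k - 3)) * coeff ?p (Suc (k - 3)) = - (real k - 2) * cycles T {0..<Suc k} / 3"
    by (simp add: coeff_pderiv)
  moreover have "Suc (k - 3) = Suc k - 3" "real (Suc (k - 3)) = real k - 2" using Suc.hyps by auto
  ultimately have "(real k - 2) * (coeff ?p (Suc k - 3) + cycles T {0..<Suc k} / 3) = 0"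
    by (simp add: field_simps)
  moreover have "real k - 2 \<noteq> 0" using Suc.hyps by simp
  ultimately show ?case by simp
qed

section \<open>Principal submatrices of order n - 2\<close>

lemma pick_eq_strict_mono:
  assumes mono: "\<And>i j. i < j \<Longrightarrow> j < k \<Longrightarrow> f i < f j" and img: "f ` {0..<k} = I"
  shows "i < k \<Longrightarrow> pick I i = f i"
proof (induction i)
  case 0
  have "f 0 \<in> I" using img 0 by auto
  moreover have "f 0 \<le> a" if "a \<in> I" for a
  proof -
    obtain j where "j < k" "a = f j" using img \<open>a \<in> I\<close> by auto
    then show ?thesis using mono[of 0 j] by (cases "j = 0") auto
  qed
  ultimately show ?case by (simp add: Least_equality)
next
  case (Suc i)
  have IH: "pick I i = f i" using Suc by simp
  have "f (Suc i) \<in> I \<and> f (Suc i) > f i" using img Suc.prems mono[of i "Suc i"] by auto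
  moreover have "f (Suc i) \<le> a" if a: "a \<in> I \<and> a > f i" for a
  proof -
    obtain j where j: "j < k" "a = f j" using img a by auto
    have "j > i"
    proof (rule ccontr)
      assume "\<not> i < j"
      then have "j = i \<or> j < i" by auto
      then show False using mono[of j i] Suc.prems j a by auto
    qed
    then show ?thesis using mono[of "Suc i" j] j by (cases "j = Suc i") auto
  qed
  ultimately show ?case unfolding pick.simps IH by (intro Least_equality) auto
qed

lemma subset_card_diff_2_obtain:
  assumes "I \<subseteq> {0..<n}" "card I = n - 2" "n \<ge> 2"
  obtains x y where "x < y" "y < n" "I = {0..<n} - {x, y}"
proof -
  have "card ({0..<n} - I) = 2" using assms by (simp add: card_Diff_subset finite_subset)
  then obtain x y where xy: "{0..<n} - I = {x, y}" "x \<noteq> y" by (auto simp: card_2_iff)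
  have I: "I = {0..<n} - {x, y}" using xy assms(1) by auto
  have "x < n" "y < n" using xy by auto
  show ?thesis
  proof (cases "x < y")
    case True then show ?thesis using that I \<open>y < n\<close> by blast
  next
    case False then have "y < x" using xy by auto
    then show ?thesis using that I \<open>x < n\<close> by (metis insert_commute)
  qed
qed

lemma principal_submatrix_remove2:
  assumes A: "A \<in> carrier_mat n n" and xy: "x < y" "y < n"
  shows "principal_submatrix A ({0..<n} - {x, y}) = mat_delete (mat_delete A y y) x x"
proof -
  let ?I = "{0..<n} - {x, y}"
  have mono: "\<And>i j. i < j \<Longrightarrow> j < n - 2 \<Longrightarrow> skip y (skip x i) < skip y (skip x j)"
    unfolding skip_def by auto
  have card: "card {i. i < n \<and> i \<in> ?I} = n - 2"
  proof -
    have "{i. i < n \<and> i \<in> ?I} = ?I" by auto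
    thus ?thesis using xy by (simp add: card_Diff_subset)
  qed
  show ?thesis unfolding principal_submatrix_def
  proof (rule eq_matI)
    show "dim_row (submatrix A ?I ?I) = dim_row (mat_delete (mat_delete A y y) x x)"
      "dim_col (submatrix A ?I ?I) = dim_col (mat_delete (mat_delete A y y) x x)"
      using A card by (simp_all add: dim_submatrix)
    fix i j assume "i < dim_row (mat_delete (mat_delete A y y) x x)"
      "j < dim_col (mat_delete (mat_delete A y y) x x)"
    hence ij: "i < n - 2" "j < n - 2" using A by auto
    have "submatrix A ?I ?I $$ (i, j) = A $$ (pick ?I i, pick ?I j)"
      by (rule submatrix_index) (use A card ij in auto)
    also have "\<dots> = A $$ (skip y (skip x i), skip y (skip x j))"
      using pick_eq_strict_mono[OF mono image_skip2[OF xy]] ij by simp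
    also have "\<dots> = mat_delete (mat_delete A y y) x x $$ (i, j)"
      using A ij xy by (simp add: mat_delete_def skip_def)
    finally show "submatrix A ?I ?I $$ (i, j) = mat_delete (mat_delete A y y) x x $$ (i, j)" .
  qed
qed

lemma principal_submatrix_adj_mat_remove2:
  assumes "x < y" "y < n"
  shows "principal_submatrix (adj_mat n T) ({0..<n} - {x, y}) =
           adj_mat (n-2) (\<lambda>i j. T (skip y (skip x i)) (skip y (skip x j)))"
  using principal_submatrix_remove2[OF adj_mat_carrier assms] mat_delete2_adj_mat[OF assms]
  by simp

lemma coeff_char_poly_principal_submatrix_remove2:
  assumes n: "n \<ge> 5" and T: "tournament n T" and xy: "x < y" "y < n"
  shows "coeff (char_poly (principal_submatrix (adj_mat n T) ({0..<n} - {x, y}))) (n - 5) =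
           - cycles T ({0..<n} - {x, y}) / 3"
proof -
  let ?f = "\<lambda>i. skip y (skip x i)"
  have T': "tournament (n-2) (\<lambda>i j. T (?f i) (?f j))"
    using tournament_reindex[OF T inj_skip2 skip2_less[OF xy]] .
  have "coeff (char_poly (adj_mat (n-2) (\<lambda>i j. T (?f i) (?f j)))) (n - 2 - 3) =
          - cycles (\<lambda>i j. T (?f i) (?f j)) {0..<n-2} / 3"
    by (rule coeff_char_poly_adj_mat_cycles) (use n T' in auto)
  moreover have "cycles (\<lambda>i j. T (?f i) (?f j)) {0..<n-2} = cycles T ({0..<n} - {x, y})"
    using cycles_reindex[OF inj_on_subset[OF inj_skip2 subset_UNIV]] image_skip2[OF xy] by simp
  moreover have "n - 2 - 3 = n - 5" by simp
  ultimately show ?thesis by (simp add: principal_submatrix_adj_mat_remove2[OF xy])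
qed

section \<open>Equal 3-cycle counts force transitivity or double regularity\<close>

context
  fixes n :: nat and T :: "nat \<Rightarrow> nat \<Rightarrow> bool" and K :: real
  assumes n: "n \<ge> 5" and T: "tournament n T"
    and const: "\<And>x y. x < n \<Longrightarrow> y < n \<Longrightarrow> x \<noteq> y \<Longrightarrow> cycles T ({0..<n} - {x, y}) = K"
begin

lemma cycles_at_remove2_const:
  assumes "x < n" "y < n" "x \<noteq> y"
  shows "cycles_at T {0..<n} x + cycles_at T {0..<n} y - cycles_through T {0..<n} y x =
           (cycles T {0..<n} - K) / 3"
  using cycles_remove2[OF T assms] const[OF assms] by simp

text \<open>Summing the previous identity over y determines the number of 3-cycles at x.\<close>

lemma cycles_at_const:
  assumes x: "x < n"
  shows "cycles_at T {0..<n} x =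
           ((real n - 1) * ((cycles T {0..<n} - K) / 3) - cycles T {0..<n}) / (real n - 4)"
proof -
  let ?V = "{0..<n}" and ?c = "cycles_at T {0..<n}" and ?e = "cycles_through T {0..<n}"
  have "(\<Sum>y\<in>?V - {x}. ?c x + ?c y - ?e y x) = (\<Sum>y\<in>?V - {x}. (cycles T ?V - K) / 3)"
    using cycles_at_remove2_const x by (intro sum.cong[OF refl]) auto
  also have "\<dots> = (real n - 1) * ((cycles T ?V - K) / 3)" using x by (simp add: card_Diff_subset)
  finally have sum: "(\<Sum>y\<in>?V - {x}. ?c x + ?c y - ?e y x) = (real n - 1) * ((cycles T ?V - K) / 3)" .
  have "(\<Sum>y\<in>?V - {x}. ?c y) = cycles T ?V - ?c x"
    using sum.remove[of ?V x ?c] x sum_cycles_at[of T ?V] by simp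
  moreover have "(\<Sum>y\<in>?V - {x}. ?e y x) = 2 * ?c x"
    using sum.remove[of ?V x "\<lambda>y. ?e y x"] x sum_cycles_through[of T ?V x]
      cycles_through_self[where T = T and x = x, OF tournament_irrefl[OF T x]] by simp
  ultimately have "(\<Sum>y\<in>?V - {x}. ?c x + ?c y - ?e y x) = (real n - 1) * ?c x + (cycles T ?V - ?c x) - 2 * ?c x"
    using x by (simp add: sum.distrib sum_subtractf card_Diff_subset)
  with sum have "(real n - 4) * ?c x = (real n - 1) * ((cycles T ?V - K) / 3) - cycles T ?V"
    by (simp add: algebra_simps)
  moreover have "real n - 4 \<noteq> 0" using n by simp
  ultimately show ?thesis by (simp add: field_simps)
qed

lemma cycles_through_const:
  assumes "x < n" "y < n" "x \<noteq> y"
  shows "cycles_through T {0..<n} y x = cycles_through T {0..<n} 1 0"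
  using cycles_at_remove2_const[OF assms] cycles_at_remove2_const[of 0 1] n
    cycles_at_const[OF assms(1)] cycles_at_const[OF assms(2)] cycles_at_const[of 0] cycles_at_const[of 1]
  by simp

end

lemma transitive_if_cycles_through_zero:
  assumes T: "tournament n T"
    and zero: "\<And>x y. x < n \<Longrightarrow> y < n \<Longrightarrow> x \<noteq> y \<Longrightarrow> cycles_through T {0..<n} x y = 0"
  shows "transitive_tournament n T"
  unfolding transitive_tournament_def
proof (intro allI impI)
  fix u v w assume uvw: "u < n" "v < n" "w < n" "T u v \<and> T v w"
  have "u \<noteq> v" "v \<noteq> w" using uvw tournament_irrefl[OF T] by auto
  have "u \<noteq> w" using uvw tournament_converse[OF T, of v w] \<open>v \<noteq> w\<close> by auto
  show "T u w"
  proof (rule ccontr)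
    assume "\<not> T u w"
    hence "T w u" using tournament_converse[OF T, of u w] uvw \<open>u \<noteq> w\<close> by auto
    hence "cyc3 T u v w = 1" using uvw unfolding cyc3_def by simp
    moreover have "cyc3 T u v w + cyc3 T u w v \<le> cycles_through T {0..<n} u v"
      unfolding cycles_through_def
      by (rule member_le_sum[of w]) (use uvw in \<open>auto intro: add_nonneg_nonneg cyc3_nonneg\<close>)
    ultimately show False using zero[of u v] uvw \<open>u \<noteq> v\<close> cyc3_nonneg[of T u w v] by simp
  qed
qed

lemma doubly_regular_if_cycles_const:
  assumes T: "tournament n T"
    and vertex: "\<And>x. x < n \<Longrightarrow> cycles_at T {0..<n} x = a"
    and arc: "\<And>x y. x < n \<Longrightarrow> y < n \<Longrightarrow> x \<noteq> y \<Longrightarrow> cycles_through T {0..<n} x y = E"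
    and "E \<noteq> 0"
  shows "doubly_regular n T"
proof -
  have arc_cycles: "(\<Sum>c\<in>{0..<n}. cyc3 T x b c) = of_bool (T x b) * E" if "x < n" "b < n" for x b
  proof (cases "T x b")
    case True
    hence "x \<noteq> b" using tournament_irrefl[OF T] that by auto
    hence "\<not> T b x" using True tournament_converse[OF T that] by simp
    hence "(\<Sum>c\<in>{0..<n}. cyc3 T x c b) = 0" by (intro sum.neutral) (simp add: cyc3_def)
    thus ?thesis using arc[OF that \<open>x \<noteq> b\<close>] True unfolding cycles_through_def sum.distrib by simp
  qed (simp add: cyc3_def)
  have outdegree: "(\<Sum>b<n. of_bool (T x b)) = a / E" if "x < n" for x
  proof -
    have "a = (\<Sum>b<n. of_bool (T x b) * E)"
      using vertex[OF that] arc_cycles[OF that] unfolding cycles_at_def atLeast0LessThan by simp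
    thus ?thesis using \<open>E \<noteq> 0\<close> by (simp add: sum_distrib_right[symmetric])
  qed
  text \<open>If x dominates y, each out-neighbour z of y is either dominated by x or closes the
    3-cycle x y z.\<close>
  have common: "(\<Sum>z<n. of_bool (T x z \<and> T y z)) = a / E - E"
    if xy: "x < n" "y < n" "T x y" for x y
  proof -
    have "x \<noteq> y" using xy tournament_irrefl[OF T] by auto
    have "(\<Sum>z<n. of_bool (T y z)) = (\<Sum>z<n. of_bool (T x z \<and> T y z) + cyc3 T x y z)"
    proof (rule sum.cong[OF refl])
      fix z assume "z \<in> {..<n}"
      show "of_bool (T y z) = of_bool (T x z \<and> T y z) + cyc3 T x y z"
      proof (cases "z = x")
        case True thus ?thesis using xy tournament_converse[OF T, of x y] \<open>x \<noteq> y\<close> by (simp add: cyc3_def)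
      next
        case False thus ?thesis using xy \<open>z \<in> {..<n}\<close> tournament_converse[OF T, of x z]
          by (auto simp: cyc3_def)
      qed
    qed
    also have "\<dots> = (\<Sum>z<n. of_bool (T x z \<and> T y z)) + E"
      using arc_cycles[of x y] xy by (simp add: sum.distrib atLeast0LessThan)
    finally show ?thesis using outdegree[OF xy(2)] by simp
  qed
  have "real (card {z. z < n \<and> T x z \<and> T y z}) = a / E - E"
    if "x < n" "y < n" "x \<noteq> y" for x y
  proof (cases "T x y")
    case True thus ?thesis using common that by (simp add: real_card_eq_sum_of_bool)
  next
    case False
    hence "T y x" using tournament_converse[OF T that] by auto
    thus ?thesis using common[of y x] that by (simp add: real_card_eq_sum_of_bool conj_commute)
  qed
  hence "card {z. z < n \<and> T x z \<and> T y z} = nat \<lfloor>a / E - E\<rfloor>"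
    if "x < n" "y < n" "x \<noteq> y" for x y
    using that by (metis floor_of_nat nat_int)
  thus ?thesis unfolding doubly_regular_def by blast
qed

lemma transitive_or_doubly_regular_if_cycles_remove2_const:
  assumes n: "n \<ge> 5" and T: "tournament n T"
    and const: "\<And>x y. x < n \<Longrightarrow> y < n \<Longrightarrow> x \<noteq> y \<Longrightarrow> cycles T ({0..<n} - {x, y}) = K"
  shows "transitive_tournament n T \<or> doubly_regular n T"
proof -
  define E where "E = cycles_through T {0..<n} 1 0"
  have arc: "cycles_through T {0..<n} x y = E" if "x < n" "y < n" "x \<noteq> y" for x y
    using cycles_through_const[OF n T const that(2,1)] that(3) unfolding E_def by simp
  show ?thesis
  proof (cases "E = 0")
    case True thus ?thesis using transitive_if_cycles_through_zero[OF T] arc by simp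
  next
    case False
    have "cycles_at T {0..<n} x = cycles_at T {0..<n} 0" if "x < n" for x
      using cycles_at_const[OF n T const that] cycles_at_const[OF n T const, of 0] n by simp
    thus ?thesis using doubly_regular_if_cycles_const[OF T _ arc False] by blast
  qed
qed

lemma transitive_or_doubly_regular_if_spectrally_monomorphic:
  assumes n: "n \<ge> 5" and T: "tournament n T"
    and sm: "spectrally_monomorphic (n - 2) (adj_mat n T)"
  shows "transitive_tournament n T \<or> doubly_regular n T"
proof (rule transitive_or_doubly_regular_if_cycles_remove2_const[OF n T])
  have ordered: "cycles T ({0..<n} - {x, y}) = cycles T ({0..<n} - {0, 1})"
    if xy: "x < y" "y < n" for x y
  proof -
    have "card ({0..<n} - {x, y}) = n - 2" "card ({0..<n} - {0, 1}) = n - 2"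
      using xy n by (simp_all add: card_Diff_subset)
    hence "char_poly (principal_submatrix (adj_mat n T) ({0..<n} - {x, y})) =
           char_poly (principal_submatrix (adj_mat n T) ({0..<n} - {0, 1}))"
      using sm unfolding spectrally_monomorphic_def by auto
    thus ?thesis using coeff_char_poly_principal_submatrix_remove2[OF n T xy]
        coeff_char_poly_principal_submatrix_remove2[OF n T, of 0 1] n by simp
  qed
  show "cycles T ({0..<n} - {x, y}) = cycles T ({0..<n} - {0, 1})"
    if "x < n" "y < n" "x \<noteq> y" for x y
    using that ordered[of x y] ordered[of y x] by (cases "x < y") (auto simp: insert_commute)
qed

section \<open>Transitive tournaments\<close>

lemma transitive_tournament_has_sink:
  assumes T: "tournament N T" and tr: "transitive_tournament N T" and "N > 0"
  obtains s where "s < N" "\<And>j. j < N \<Longrightarrow> \<not> T s j"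
proof -
  define out where "out s = {j. j < N \<and> T s j}" for s
  define m where "m = Min ((\<lambda>s. card (out s)) ` {0..<N})"
  have "m \<in> (\<lambda>s. card (out s)) ` {0..<N}" unfolding m_def using \<open>N > 0\<close> by (intro Min_in) auto
  then obtain s where s: "s < N" "card (out s) = m" by auto
  have min: "m \<le> card (out t)" if "t < N" for t unfolding m_def using that by (intro Min_le) auto
  have "\<not> T s j" if j: "j < N" for j
  proof
    assume sj: "T s j"
    have "out j \<subset> out s"
    proof
      show "out j \<subseteq> out s" unfolding out_def using tr sj s j unfolding transitive_tournament_def by blast
      have "j \<in> out s" "j \<notin> out j" unfolding out_def using sj j tournament_irrefl[OF T] by auto
      thus "out j \<noteq> out s" by blast
    qed
    hence "card (out j) < card (out s)" by (rule psubset_card_mono[rotated]) (simp add: out_def)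
    thus False using min[OF j] s(2) by simp
  qed
  thus ?thesis using that s(1) by blast
qed

lemma char_poly_transitive_tournament:
  assumes "tournament k T" "transitive_tournament k T"
  shows "char_poly (adj_mat k T) = monom 1 k"
  using assms
proof (induction k arbitrary: T)
  case 0
  then show ?case by (simp add: char_poly_def char_poly_matrix_def det_def')
next
  case (Suc k)
  let ?p = "char_poly (adj_mat (Suc k) T)"
  have "pderiv ?p = (\<Sum>i<Suc k. monom 1 k)"
    using Suc.IH[OF tournament_reindex[OF Suc.prems(1) inj_skip skip_less]
        transitive_tournament_reindex[OF Suc.prems(2) skip_less]]
    by (simp add: pderiv_char_poly[of _ "Suc k"] mat_delete_adj_mat del: sum.lessThan_Suc)
  also have "\<dots> = pderiv (monom 1 (Suc k))"
    by (simp add: pderiv_monom of_nat_poly smult_monom del: of_nat_Suc)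
  finally have "pderiv (?p - monom 1 (Suc k)) = 0" by (simp add: pderiv_diff)
  then obtain h where h: "?p - monom 1 (Suc k) = [:h:]" using pderiv_iszero by blast
  obtain s where s: "s < Suc k" "\<And>j. j < Suc k \<Longrightarrow> \<not> T s j"
    using transitive_tournament_has_sink[OF Suc.prems] by blast
  text \<open>The row of a sink in 0I - A vanishes.\<close>
  have "h = coeff (?p - monom 1 (Suc k)) 0" using h by simp
  also have "\<dots> = poly ?p 0" by (simp add: poly_0_coeff_0)
  also have "\<dots> = det (charmat (Suc k) 0 (adj_mat (Suc k) T))" by (simp add: poly_char_poly_eq_det)
  also have "\<dots> = 0"
  proof -
    have "charmat (Suc k) 0 (adj_mat (Suc k) T) $$ (s, j) = 0" if "j < Suc k" for j
      using s that by (simp add: charmat_def)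
    thus ?thesis using laplace_expansion_row[OF charmat_carrier s(1)] by simp
  qed
  finally show ?case using h by simp
qed

lemma char_poly_principal_submatrix_transitive:
  assumes n: "n \<ge> 2" and T: "tournament n T" and tr: "transitive_tournament n T"
    and I: "I \<subseteq> {0..<n}" "card I = n - 2"
  shows "char_poly (principal_submatrix (adj_mat n T) I) = monom 1 (n - 2)"
proof -
  obtain x y where xy: "x < y" "y < n" and I_eq: "I = {0..<n} - {x, y}"
    using subset_card_diff_2_obtain[OF I n] .
  show ?thesis unfolding I_eq principal_submatrix_adj_mat_remove2[OF xy]
    by (rule char_poly_transitive_tournament[OF tournament_reindex[OF T inj_skip2 skip2_less[OF xy]]
          transitive_tournament_reindex[OF tr skip2_less[OF xy]]])
qed

section \<open>Degrees in doubly regular tournaments\<close>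

lemma sum_arcs_tournament:
  assumes T: "tournament n T" and S: "S \<subseteq> {0..<n}"
  shows "(\<Sum>y\<in>S. \<Sum>z\<in>S. (of_bool (T y z) :: real)) = real (card S) * (real (card S) - 1) / 2"
proof -
  have fin: "finite S" using S finite_subset by blast
  have "(\<Sum>y\<in>S. \<Sum>z\<in>S. (of_bool (T y z) :: real)) + (\<Sum>y\<in>S. \<Sum>z\<in>S. (of_bool (T z y) :: real))
      = (\<Sum>y\<in>S. \<Sum>z\<in>S. (of_bool (y \<noteq> z) :: real))"
    unfolding sum.distrib[symmetric]
  proof (intro sum.cong[OF refl])
    fix y z assume "y \<in> S" "z \<in> S"
    hence "y < n" "z < n" using S by auto
    thus "(of_bool (T y z) :: real) + of_bool (T z y) = of_bool (y \<noteq> z)"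
      using T unfolding tournament_def by (cases "y = z") auto
  qed
  also have "\<dots> = (\<Sum>y\<in>S. real (card S) - 1)"
  proof (rule sum.cong[OF refl])
    fix y assume y: "y \<in> S"
    have "(\<Sum>z\<in>S. (of_bool (y \<noteq> z) :: real)) = real (card (S \<inter> {z. y \<noteq> z}))"
      using fin by simp
    also have "S \<inter> {z. y \<noteq> z} = S - {y}" by auto
    also have "real (card (S - {y})) = real (card S) - 1"
      using y fin card_gt_0_iff[of S] by (auto simp: of_nat_diff)
    finally show "(\<Sum>z\<in>S. (of_bool (y \<noteq> z) :: real)) = real (card S) - 1" .
  qed
  finally show ?thesis by (subst (asm) (2) sum.swap) simp
qed

context
  fixes n :: nat and T :: "nat \<Rightarrow> nat \<Rightarrow> bool" and c :: nat
  assumes T: "tournament n T"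
    and common: "\<And>x y. x < n \<Longrightarrow> y < n \<Longrightarrow> x \<noteq> y \<Longrightarrow> card {z. z < n \<and> T x z \<and> T y z} = c"
begin

text \<open>Counting the arcs inside the out-neighbourhood of x in two ways.\<close>

lemma outdegree_cases:
  assumes x: "x < n"
  shows "card {z. z < n \<and> T x z} = 0 \<or> card {z. z < n \<and> T x z} = 2 * c + 1"
proof -
  let ?O = "{z. z < n \<and> T x z}"
  define m where "m = real (card ?O)"
  have "m * (m - 1) / 2 = (\<Sum>y\<in>?O. \<Sum>z\<in>?O. (of_bool (T y z) :: real))"
    unfolding m_def by (rule sum_arcs_tournament[OF T, symmetric]) auto
  also have "\<dots> = (\<Sum>y\<in>?O. real c)"
  proof (rule sum.cong[OF refl])
    fix y assume y: "y \<in> ?O"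
    hence "y < n" "x \<noteq> y" using x tournament_irrefl[OF T] by auto
    have "(\<Sum>z\<in>?O. (of_bool (T y z) :: real)) = real (card (?O \<inter> {z. T y z}))" by simp
    also have "?O \<inter> {z. T y z} = {z. z < n \<and> T x z \<and> T y z}" by auto
    finally show "(\<Sum>z\<in>?O. (of_bool (T y z) :: real)) = real c"
      using common[OF x \<open>y < n\<close> \<open>x \<noteq> y\<close>] by simp
  qed
  also have "\<dots> = m * real c" unfolding m_def by simp
  finally have "m * (m - real (2 * c + 1)) = 0" by (simp add: field_simps del: mult_eq_0_iff)
  hence "m = real 0 \<or> m = real (2 * c + 1)" by auto
  thus ?thesis unfolding m_def of_nat_eq_iff .
qed

lemma sum_outdegree: "(\<Sum>x<n. real (card {z. z < n \<and> T x z})) = real n * (real n - 1) / 2"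
proof -
  have "(\<Sum>x<n. real (card {z. z < n \<and> T x z})) = (\<Sum>x\<in>{0..<n}. \<Sum>z\<in>{0..<n}. (of_bool (T x z) :: real))"
    by (simp add: real_card_eq_sum_of_bool atLeast0LessThan)
  thus ?thesis using sum_arcs_tournament[OF T, of "{0..<n}"] by simp
qed

text \<open>A vertex of out-degree 0 forces c = 0, hence all out-degrees are at most 1, which is
  impossible for n \<ge> 4 since there are n(n-1)/2 arcs.\<close>

lemma doubly_regular_outdegree:
  assumes n: "n \<ge> 4" and x: "x < n"
  shows "card {z. z < n \<and> T x z} = 2 * c + 1"
proof (rule ccontr)
  assume "card {z. z < n \<and> T x z} \<noteq> 2 * c + 1"
  hence "card {z. z < n \<and> T x z} = 0" using outdegree_cases[OF x] by blast
  hence sink: "\<not> T x z" if "z < n" for z using that by simp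
  define y :: nat where "y = (if x = 0 then 1 else 0)"
  have "y < n" "x \<noteq> y" using n unfolding y_def by auto
  hence "c = 0" using common[OF x] sink by force
  hence "card {z. z < n \<and> T u z} \<le> 1" if "u < n" for u using outdegree_cases[OF that] by presburger
  hence "(\<Sum>u<n. real (card {z. z < n \<and> T u z})) \<le> (\<Sum>u<n. 1)"
    by (intro sum_mono) simp
  hence "real n * (real n - 1) / 2 \<le> real n" using sum_outdegree by simp
  thus False using n by (simp add: field_simps)
qed

lemma doubly_regular_order:
  assumes "n \<ge> 4" shows "n = 4 * c + 3"
proof -
  have "real n * (real n - 1) / 2 = (\<Sum>x<n. real (card {z. z < n \<and> T x z}))"
    by (rule sum_outdegree[symmetric])
  also have "\<dots> = real n * (2 * real c + 1)" using doubly_regular_outdegree[OF assms] by simp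
  finally have "real n * (real n - real (4 * c + 3)) = 0"
    by (simp add: field_simps del: mult_eq_0_iff)
  moreover have "real n \<noteq> 0" using assms by simp
  ultimately have "real n = real (4 * c + 3)" by (simp only: mult_eq_0_iff right_minus_eq) simp
  thus ?thesis by (simp only: of_nat_eq_iff)
qed

lemma doubly_regular_paths2:
  assumes n: "n \<ge> 4" and ik: "i < n" "k < n" "i \<noteq> k"
  shows "(\<Sum>j<n. (of_bool (T i j \<and> T j k) :: real)) = real c + 1 - of_bool (T i k)"
proof -
  have "(\<Sum>j<n. (of_bool (T i j) :: real))
      = (\<Sum>j<n. of_bool (T i j \<and> T k j) + of_bool (T i j \<and> T j k) + of_bool (j = k \<and> T i k))"
  proof (rule sum.cong[OF refl])
    fix j assume "j \<in> {..<n}"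
    thus "(of_bool (T i j) :: real) = of_bool (T i j \<and> T k j) + of_bool (T i j \<and> T j k) + of_bool (j = k \<and> T i k)"
      using tournament_irrefl[OF T ik(2)] tournament_converse[OF T ik(2), of j] by (cases "j = k") auto
  qed
  also have "\<dots> = real c + (\<Sum>j<n. of_bool (T i j \<and> T j k)) + of_bool (T i k)"
    using real_card_eq_sum_of_bool[of n "\<lambda>j. T i j \<and> T k j"] common[OF ik] ik
    by (simp add: sum.distrib sum.delta)
  finally show ?thesis
    using doubly_regular_outdegree[OF n ik(1)] real_card_eq_sum_of_bool[of n "T i"] by simp
qed

end

section \<open>Principal minors from the inverse matrix\<close>

lemma index_mult_mat_sum:
  assumes "A \<in> carrier_mat n n" "B \<in> carrier_mat n n" "i < n" "j < n"
  shows "(A * B) $$ (i,j) = (\<Sum>l<n. A $$ (i,l) * B $$ (l,j))"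
  using assms by (simp add: scalar_prod_def atLeast0LessThan)

lemma det_mat_delete_right_inverse:
  assumes M: "(M :: real mat) \<in> carrier_mat n n" and R: "R \<in> carrier_mat n n"
    and MR: "M * R = 1\<^sub>m n" and x: "x < n"
  shows "det (mat_delete M x x) = det M * R $$ (x,x)"
proof -
  let ?adj = "Determinant.adj_mat M"
  have adjC: "?adj \<in> carrier_mat n n" and adjM: "?adj * M = det M \<cdot>\<^sub>m 1\<^sub>m n"
    using adj_mat[OF M] by auto
  have "?adj = ?adj * (M * R)" using MR adjC by simp
  also have "\<dots> = (?adj * M) * R" using adjC M R by (simp add: assoc_mult_mat)
  also have "\<dots> = det M \<cdot>\<^sub>m R" unfolding adjM using R by (subst mult_smult_assoc_mat) auto
  finally have "?adj $$ (x,x) = (det M \<cdot>\<^sub>m R) $$ (x,x)" by simp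
  moreover have "?adj $$ (x,x) = det (mat_delete M x x)"
    using M x by (simp add: Determinant.adj_mat_def cofactor_def)
  ultimately show ?thesis using R x by simp
qed

text \<open>If R is the inverse of M and R(y,y) \<noteq> 0, then deleting row and column y of M leaves a matrix
  whose inverse is obtained from R by one step of Gaussian elimination on the pivot R(y,y).\<close>

definition delete_inverse :: "real mat \<Rightarrow> nat \<Rightarrow> nat \<Rightarrow> real mat" where
  "delete_inverse R N y = mat N N (\<lambda>(i,j).
     R $$ (skip y i, skip y j) - R $$ (skip y i, y) * R $$ (y, skip y j) / R $$ (y, y))"

lemma mat_delete_mult_delete_inverse:
  assumes M: "(M :: real mat) \<in> carrier_mat (Suc N) (Suc N)" and R: "R \<in> carrier_mat (Suc N) (Suc N)"
    and MR: "M * R = 1\<^sub>m (Suc N)" and y: "y < Suc N" and Ryy: "R $$ (y,y) \<noteq> 0"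
  shows "mat_delete M y y * delete_inverse R N y = 1\<^sub>m N"
proof (rule eq_matI)
  show "dim_row (mat_delete M y y * delete_inverse R N y) = dim_row (1\<^sub>m N)" using M by simp
  show "dim_col (mat_delete M y y * delete_inverse R N y) = dim_col (1\<^sub>m N)" by (simp add: delete_inverse_def)
  fix i k assume "i < dim_row (1\<^sub>m N)" "k < dim_col (1\<^sub>m N)"
  hence ik: "i < N" "k < N" by auto
  let ?V = "{0..<Suc N}"
  have row: "(\<Sum>j\<in>?V. M $$ (u,j) * R $$ (j,v)) = (if u = v then 1 else 0)" if "u < Suc N" "v < Suc N" for u v
  proof -
    have "(M * R) $$ (u,v) = (\<Sum>j<Suc N. M $$ (u,j) * R $$ (j,v))" by (rule index_mult_mat_sum[OF M R that])
    thus ?thesis using MR that by (simp add: atLeast0LessThan)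
  qed
  have rowy: "(\<Sum>j\<in>?V - {y}. M $$ (u,j) * R $$ (j,v)) = (if u = v then 1 else 0) - M $$ (u,y) * R $$ (y,v)"
    if "u < Suc N" "v < Suc N" for u v
    using row[OF that] sum.remove[of ?V y "\<lambda>j. M $$ (u,j) * R $$ (j,v)"] y by simp
  let ?u = "skip y i" and ?v = "skip y k"
  have uv: "?u < Suc N" "?v < Suc N" "?u \<noteq> y" "?v \<noteq> y" using ik skip_less[of _ N y] by (auto simp: skip_def)
  have M1: "mat_delete M y y \<in> carrier_mat N N" using mat_delete_carrier[OF M] by simp
  have RC: "delete_inverse R N y \<in> carrier_mat N N" by (simp add: delete_inverse_def)
  have "(mat_delete M y y * delete_inverse R N y) $$ (i,k) = (\<Sum>j<N. mat_delete M y y $$ (i, j) * delete_inverse R N y $$ (j,k))"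
    by (rule index_mult_mat_sum[OF M1 RC ik])
  also have "\<dots> = (\<Sum>j<N. M $$ (?u, skip y j) * delete_inverse R N y $$ (j,k))"
    using M ik by (intro sum.cong[OF refl]) (simp add: mat_delete_def skip_def)
  also have "\<dots> = (\<Sum>j<N. M $$ (?u, skip y j) * (R $$ (skip y j, ?v) - R $$ (skip y j, y) * R $$ (y, ?v) / R $$ (y,y)))"
    using M ik by (intro sum.cong[OF refl]) (auto simp: delete_inverse_def mat_delete_def skip_def)
  also have "\<dots> = (\<Sum>j\<in>?V - {y}. M $$ (?u, j) * (R $$ (j, ?v) - R $$ (j, y) * R $$ (y, ?v) / R $$ (y,y)))"
    by (rule sum_skip[of y N "\<lambda>j. M $$ (?u, j) * (R $$ (j, ?v) - R $$ (j, y) * R $$ (y, ?v) / R $$ (y,y))"]) (use y in simp)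
  also have "\<dots> = (\<Sum>j\<in>?V - {y}. M $$ (?u, j) * R $$ (j, ?v)) - (\<Sum>j\<in>?V - {y}. M $$ (?u, j) * R $$ (j, y)) * (R $$ (y, ?v) / R $$ (y,y))"
  proof -
    have "(\<Sum>j\<in>?V - {y}. M $$ (?u, j) * (R $$ (j, ?v) - R $$ (j, y) * R $$ (y, ?v) / R $$ (y,y))) =
      (\<Sum>j\<in>?V - {y}. M $$ (?u, j) * R $$ (j, ?v) - (M $$ (?u, j) * R $$ (j, y)) * (R $$ (y, ?v) / R $$ (y,y)))"
      by (rule sum.cong[OF refl]) (simp add: algebra_simps)
    thus ?thesis by (simp only: sum_subtractf sum_distrib_right)
  qed
  also have "\<dots> = (if ?u = ?v then 1 else 0)"
    using rowy[OF uv(1,2)] rowy[OF uv(1) y] uv Ryy by (simp add: field_simps)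
  also have "\<dots> = 1\<^sub>m N $$ (i,k)" using ik inj_skip[of y] by (auto simp: inj_def)
  finally show "(mat_delete M y y * delete_inverse R N y) $$ (i,k) = 1\<^sub>m N $$ (i,k)" .
qed

lemma det_mat_delete2_right_inverse:
  assumes M: "(M :: real mat) \<in> carrier_mat (Suc N) (Suc N)" and R: "R \<in> carrier_mat (Suc N) (Suc N)"
    and MR: "M * R = 1\<^sub>m (Suc N)" and xy: "x < y" "y < Suc N" and Ryy: "R $$ (y,y) \<noteq> 0"
  shows "det (mat_delete (mat_delete M y y) x x) = det M * (R $$ (x,x) * R $$ (y,y) - R $$ (x,y) * R $$ (y,x))"
proof -
  have M1: "mat_delete M y y \<in> carrier_mat N N" using mat_delete_carrier[OF M] by simp
  have RC: "delete_inverse R N y \<in> carrier_mat N N" by (simp add: delete_inverse_def)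
  have x: "x < N" using xy by simp
  have "det (mat_delete (mat_delete M y y) x x) = det (mat_delete M y y) * delete_inverse R N y $$ (x,x)"
    by (rule det_mat_delete_right_inverse[OF M1 RC mat_delete_mult_delete_inverse[OF M R MR xy(2) Ryy] x])
  also have "det (mat_delete M y y) = det M * R $$ (y,y)" by (rule det_mat_delete_right_inverse[OF M R MR xy(2)])
  also have "delete_inverse R N y $$ (x,x) = R $$ (x,x) - R $$ (x,y) * R $$ (y,x) / R $$ (y,y)"
    using x xy by (simp add: delete_inverse_def skip_def)
  finally have "det (mat_delete (mat_delete M y y) x x) = det M * (R $$ (y,y) * (R $$ (x,x) - R $$ (x,y) * R $$ (y,x) / R $$ (y,y)))"
    by (simp add: mult.assoc)
  also have "R $$ (y,y) * (R $$ (x,x) - R $$ (x,y) * R $$ (y,x) / R $$ (y,y)) = R $$ (x,x) * R $$ (y,y) - R $$ (x,y) * R $$ (y,x)"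
    using Ryy by (simp add: field_simps)
  finally show ?thesis .
qed

lemma poly_eq_if_eq_on_Ioi:
  assumes "\<And>z. z > c \<Longrightarrow> poly p z = poly q (z :: real)" shows "p = q"
proof (rule ccontr)
  assume "p \<noteq> q"
  hence "p - q \<noteq> 0" by simp
  hence fin: "finite {z. poly (p - q) z = 0}" by (rule poly_roots_finite)
  have "{c<..} \<subseteq> {z. poly (p - q) z = 0}" using assms by auto
  moreover have "infinite {c<..}" by (rule infinite_Ioi)
  ultimately show False using fin finite_subset by blast
qed

text \<open>Comparing leading coefficients in pderiv G * h = N k G shows that a nonzero solution G has
  degree N; the difference of two monic solutions of degree N has smaller degree, so it vanishes.\<close>

lemma monic_poly_ode_unique:
  fixes P F h k :: "real poly"
  assumes P: "pderiv P * h = Polynomial.smult (real N) k * P" and F: "pderiv F * h = Polynomial.smult (real N) k * F"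
    and dh: "degree h = degree k + 1" and lh: "lead_coeff h = 1" and lk: "lead_coeff k = 1"
    and dP: "degree P = N" "lead_coeff P = 1" and dF: "degree F = N" "lead_coeff F = 1"
  shows "P = F"
proof (rule ccontr)
  assume ne: "P \<noteq> F"
  define G where "G = P - F"
  have G0: "G \<noteq> 0" using ne unfolding G_def by simp
  have Geq: "pderiv G * h = Polynomial.smult (real N) k * G"
  proof -
    have "pderiv G * h = pderiv P * h - pderiv F * h" unfolding G_def pderiv_diff by (rule left_diff_distrib)
    also have "\<dots> = Polynomial.smult (real N) k * P - Polynomial.smult (real N) k * F" using P F by simp
    also have "\<dots> = Polynomial.smult (real N) k * G" unfolding G_def by (rule right_diff_distrib[symmetric])
    finally show ?thesis .
  qed
  have "coeff G N = 0" unfolding G_def using dP dF by simp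
  moreover have "degree G \<le> N" unfolding G_def using dP dF by (intro degree_diff_le) simp_all
  ultimately have dG: "degree G < N" using G0 by (metis le_neq_implies_less leading_coeff_0_iff)
  have A1: "coeff (Polynomial.smult (real N) k * G) (degree k + degree G) = real N * lead_coeff G"
    using coeff_mult_degree_sum[of k G] lk by simp
  have A2: "coeff (pderiv G * h) (degree k + degree G) = real (degree G) * lead_coeff G"
  proof (cases "degree G = 0")
    case True
    hence "pderiv G = 0" by (simp add: pderiv_eq_0_iff)
    thus ?thesis using True by simp
  next
    case False
    have dG': "degree (pderiv G) = degree G - 1" by (rule degree_pderiv)
    have "degree k + degree G = degree (pderiv G) + degree h" using dG' dh False by simp
    hence "coeff (pderiv G * h) (degree k + degree G) = lead_coeff (pderiv G) * lead_coeff h"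
      using coeff_mult_degree_sum[of "pderiv G" h] by simp
    also have "lead_coeff (pderiv G) = real (degree G) * lead_coeff G"
      using False unfolding dG' coeff_pderiv by simp
    finally show ?thesis using lh by simp
  qed
  from A2 have "coeff (Polynomial.smult (real N) k * G) (degree k + degree G) = real (degree G) * lead_coeff G"
    unfolding Geq .
  with A1 have "real N * lead_coeff G = real (degree G) * lead_coeff G" by linarith
  moreover have "lead_coeff G \<noteq> 0" using G0 by simp
  ultimately have "real N = real (degree G)" by (metis mult_right_cancel)
  thus False using dG by simp
qed

section \<open>Doubly regular tournaments: the resolvent\<close>

definition minor_char_poly :: "nat \<Rightarrow> real poly" where
  "minor_char_poly n = [: (real n + 1) / 4, 1, 1 :] ^ ((n - 5) div 2) *
     [: - (real n - 3) / 4, - (real n - 5) / 2, - (real n - 5) / 2, 1 :]"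

locale doubly_regular_tournament =
  fixes n :: nat and T :: "nat \<Rightarrow> nat \<Rightarrow> bool" and c :: nat
  assumes n: "n \<ge> 5" and T: "tournament n T"
    and common: "\<And>x y. x < n \<Longrightarrow> y < n \<Longrightarrow> x \<noteq> y \<Longrightarrow> card {z. z < n \<and> T x z \<and> T y z} = c"
begin

abbreviation "A \<equiv> adj_mat n T"

lemma order_eq: "n = 4 * c + 3"
  using doubly_regular_order[OF T common] n by simp

definition "deg = 2 * real c + 1"
definition "q = real c + 1"

lemma outdegree: "i < n \<Longrightarrow> (\<Sum>j<n. (of_bool (T i j) :: real)) = deg"
  using doubly_regular_outdegree[OF T common, of i] n real_card_eq_sum_of_bool[of n "T i"]
  unfolding deg_def by simp

lemma paths2:
  assumes "i < n" "k < n"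
  shows "(\<Sum>j<n. (of_bool (T i j \<and> T j k) :: real)) = (if i = k then 0 else q - of_bool (T i k))"
proof (cases "i = k")
  case True
  have "(\<Sum>j<n. (of_bool (T i j \<and> T j i) :: real)) = 0"
    using tournament_converse[OF T assms(1)] tournament_irrefl[OF T] by (intro sum.neutral) auto
  thus ?thesis using True by simp
next
  case False
  thus ?thesis using doubly_regular_paths2[OF T common _ assms False] n unfolding q_def by simp
qed

text \<open>By \<open>outdegree\<close> and \<open>paths2\<close>, A^2 + A + qI = qJ and AJ = deg J for the all-ones
  matrix J, so the inverse of zI - A is res_I z I + res_A z A + res_J z J.\<close>

definition "quad z = z * z + z + q"
definition "res_I z = (z + 1) / quad z"
definition "res_A z = 1 / quad z"
definition "res_J z = q / (quad z * (z - deg))"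
definition "resolvent z =
  mat n n (\<lambda>(i,j). (if i = j then res_I z else 0) + (if T i j then res_A z else 0) + res_J z)"

lemma resolvent_carrier [simp]: "resolvent z \<in> carrier_mat n n"
  unfolding resolvent_def by simp

lemma quad_pos: "z > deg \<Longrightarrow> quad z > 0"
  unfolding quad_def q_def deg_def by (smt (verit) mult_nonneg_nonneg of_nat_0_le_iff)

lemma charmat_mult_resolvent:
  assumes z: "z > deg" shows "charmat n z A * resolvent z = 1\<^sub>m n"
proof (rule eq_matI)
  show "dim_row (charmat n z A * resolvent z) = dim_row (1\<^sub>m n)"
    "dim_col (charmat n z A * resolvent z) = dim_col (1\<^sub>m n)"
    by (simp_all add: charmat_def resolvent_def)
  fix i k assume "i < dim_row (1\<^sub>m n)" "k < dim_col (1\<^sub>m n)"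
  hence ik: "i < n" "k < n" by auto
  let ?a = "res_I z" and ?b = "res_A z" and ?g = "res_J z" and ?t = "\<lambda>i j. (of_bool (T i j) :: real)"
  let ?entry = "z * ((if i = k then ?a else 0) + ?b * ?t i k + ?g) - ?a * ?t i k
      - ?b * (\<Sum>j<n. of_bool (T i j \<and> T j k)) - ?g * deg"
  have quad0: "quad z \<noteq> 0" using quad_pos[OF z] by simp
  have "z - deg \<noteq> 0" using z by simp
  hence J: "res_J z * (z - deg) = q / quad z" using quad0 unfolding res_J_def by (simp add: field_simps)
  have "(charmat n z A * resolvent z) $$ (i,k) = (\<Sum>j<n. charmat n z A $$ (i,j) * resolvent z $$ (j,k))"
    by (rule index_mult_mat_sum[OF charmat_carrier resolvent_carrier ik])
  also have "\<dots> = (\<Sum>j<n. (if j = i then z * ((if i = k then ?a else 0) + ?b * ?t i k + ?g) else 0)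
       - (if j = k then ?a * ?t i k else 0) - ?b * of_bool (T i j \<and> T j k) - ?g * ?t i j)"
  proof (rule sum.cong[OF refl])
    fix j assume j: "j \<in> {..<n}"
    have irr: "\<not> T i i" "\<not> T k k" using tournament_irrefl[OF T] ik by auto
    show "charmat n z A $$ (i,j) * resolvent z $$ (j,k) =
        (if j = i then z * ((if i = k then ?a else 0) + ?b * ?t i k + ?g) else 0)
       - (if j = k then ?a * ?t i k else 0) - ?b * of_bool (T i j \<and> T j k) - ?g * ?t i j"
      using ik j irr by (auto simp: charmat_def resolvent_def algebra_simps)
  qed
  also have "\<dots> = ?entry"
    using ik outdegree[OF ik(1)] by (simp add: sum_subtractf sum_distrib_left[symmetric] sum.delta')
  also have "?entry = 1\<^sub>m n $$ (i,k)"
  proof (cases "i = k")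
    case True
    have "z * res_I z + q / quad z = (z * (z + 1) + q) / quad z"
      unfolding res_I_def by (simp add: add_divide_distrib[symmetric] times_divide_eq_right)
    also have "\<dots> = 1" using quad0 by (simp add: quad_def algebra_simps)
    finally show ?thesis
      using True J paths2[OF ik] ik tournament_irrefl[OF T] by (simp add: algebra_simps)
  next
    case False
    have "(\<Sum>j<n. (of_bool (T i j \<and> T j k) :: real)) = q - ?t i k"
      using False paths2[OF ik] by simp
    hence "?entry = ?t i k * (z * res_A z - res_I z + res_A z) + (res_J z * (z - deg) - res_A z * q)"
      using False by (simp only:) (simp add: algebra_simps)
    also have "z * res_A z - res_I z + res_A z = 0"
      using quad0 unfolding res_I_def res_A_def by (simp add: field_simps)
    also have "res_J z * (z - deg) - res_A z * q = 0"
      unfolding J res_A_def by simp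
    finally show ?thesis using False ik by simp
  qed
  finally show "(charmat n z A * resolvent z) $$ (i,k) = 1\<^sub>m n $$ (i,k)" .
qed

lemma resolvent_diag: "i < n \<Longrightarrow> resolvent z $$ (i,i) = res_I z + res_J z"
  using tournament_irrefl[OF T] unfolding resolvent_def by simp

lemma resolvent_off_diag:
  "i < n \<Longrightarrow> k < n \<Longrightarrow> i \<noteq> k \<Longrightarrow> resolvent z $$ (i,k) = of_bool (T i k) * res_A z + res_J z"
  unfolding resolvent_def by simp

lemma resolvent_diag_pos: "z > deg \<Longrightarrow> res_I z + res_J z > 0"
  using quad_pos[of z] unfolding res_I_def res_J_def q_def deg_def
  by (simp add: add_pos_pos)

definition "res_den = [:q, 1, 1:] * [:-deg, 1:]"
definition "res_num = [:1, 1:] * [:-deg, 1:] + [:q:]"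

lemma poly_res_den: "poly res_den z = quad z * (z - deg)"
  unfolding res_den_def quad_def by (simp add: algebra_simps)

lemma resolvent_diag_eq: "z > deg \<Longrightarrow> res_I z + res_J z = poly res_num z / poly res_den z"
  using quad_pos[of z] unfolding poly_res_den res_I_def res_J_def res_num_def
  by (simp add: field_simps)

text \<open>The trace of the resolvent is the logarithmic derivative of the characteristic polynomial.\<close>

lemma char_poly_ode: "pderiv (char_poly A) * res_den = Polynomial.smult (real n) res_num * char_poly A"
proof (rule poly_eq_if_eq_on_Ioi[of deg])
  fix z assume z: "z > deg"
  obtain N where N: "n = Suc N" using n by (cases n) auto
  have AC: "A \<in> carrier_mat (Suc N) (Suc N)" using N by simp
  let ?M = "charmat n z A"
  have "poly (char_poly (mat_delete A i i)) z = det ?M * (res_I z + res_J z)" if i: "i < n" for i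
  proof -
    have "poly (char_poly (mat_delete A i i)) z = det (charmat N z (mat_delete A i i))"
      by (rule poly_char_poly_eq_det) (use mat_delete_carrier[OF AC] in simp)
    also have "charmat N z (mat_delete A i i) = mat_delete ?M i i"
      using charmat_mat_delete[OF AC, of i z] i N by simp
    also have "det (mat_delete ?M i i) = det ?M * resolvent z $$ (i,i)"
      by (rule det_mat_delete_right_inverse[OF charmat_carrier resolvent_carrier
            charmat_mult_resolvent[OF z] i])
    finally show ?thesis using resolvent_diag[OF i] by simp
  qed
  hence "poly (pderiv (char_poly A)) z = (\<Sum>i<n. det ?M * (res_I z + res_J z))"
    by (simp add: pderiv_char_poly[of _ n] poly_sum)
  also have "\<dots> = real n * (res_I z + res_J z) * poly (char_poly A) z"
    by (simp add: poly_char_poly_eq_det[OF adj_mat_carrier])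
  finally have "poly (pderiv (char_poly A)) z = real n * (res_I z + res_J z) * poly (char_poly A) z" .
  moreover have "poly res_den z \<noteq> 0" using quad_pos[OF z] z unfolding poly_res_den by simp
  ultimately show "poly (pderiv (char_poly A) * res_den) z =
      poly (Polynomial.smult (real n) res_num * char_poly A) z"
    using resolvent_diag_eq[OF z] by (simp add: field_simps)
qed

definition "char_poly_dr = [:-deg, 1:] * [:q, 1, 1:] ^ (2 * c + 1)"

lemma char_poly_dr_ode:
  "pderiv char_poly_dr * res_den = Polynomial.smult (real n) res_num * char_poly_dr"
proof -
  define p where "p = [:q, 1, 1:]"
  define X where "X = [:-deg, 1:]"
  let ?m = "2 * c"
  have F: "char_poly_dr = X * p ^ Suc ?m" unfolding char_poly_dr_def p_def X_def by simp
  have "pderiv char_poly_dr = X * (Polynomial.smult (of_nat (Suc ?m)) (p ^ ?m) * [:1, 2:]) + p ^ Suc ?m"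
    unfolding F pderiv_mult pderiv_power_Suc by (simp add: p_def X_def pderiv_pCons)
  hence "pderiv char_poly_dr * res_den =
      p ^ ?m * X * p * (p + Polynomial.smult (of_nat (Suc ?m)) (X * [:1, 2:]))"
    unfolding res_den_def p_def[symmetric] X_def[symmetric]
    by (simp add: algebra_simps mult_smult_left mult_smult_right)
  also have "p + Polynomial.smult (of_nat (Suc ?m)) (X * [:1, 2:]) = Polynomial.smult (real n) res_num"
    unfolding res_num_def order_eq deg_def q_def p_def X_def by (simp add: algebra_simps)
  also have "p ^ ?m * X * p * Polynomial.smult (real n) res_num =
      Polynomial.smult (real n) res_num * char_poly_dr"
    unfolding F by (simp add: algebra_simps)
  finally show ?thesis .
qed

lemma char_poly_adj_mat: "char_poly A = char_poly_dr"
proof (rule monic_poly_ode_unique[OF char_poly_ode char_poly_dr_ode])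
  show "degree res_den = degree res_num + 1" "lead_coeff res_den = 1" "lead_coeff res_num = 1"
    unfolding res_den_def res_num_def by simp_all
  show "degree (char_poly A) = n" "lead_coeff (char_poly A) = 1"
    using degree_monic_char_poly[of A n] by simp_all
  define p where "p = [:q, 1, 1:]"
  have p0: "p \<noteq> 0" and dp: "degree p = 2" and lp: "lead_coeff p = 1" unfolding p_def by simp_all
  have "degree char_poly_dr = degree [:-deg, 1:] + degree (p ^ (2 * c + 1))"
    unfolding char_poly_dr_def p_def[symmetric] by (rule degree_mult_eq) (use p0 in simp_all)
  thus "degree char_poly_dr = n" using order_eq by (simp add: degree_power_eq[OF p0] dp del: power_Suc)
  show "lead_coeff char_poly_dr = 1"
    unfolding char_poly_dr_def p_def[symmetric] lead_coeff_mult lead_coeff_power lp by simp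
qed

lemma char_poly_dr_mult_minor:
  assumes z: "z > deg"
  shows "poly char_poly_dr z * ((res_I z + res_J z) * (res_I z + res_J z) - res_J z * (res_A z + res_J z)) =
           poly (minor_char_poly n) z"
proof -
  define u where "u = z - deg"
  define P where "P = quad z"
  have u0: "u \<noteq> 0" using z unfolding u_def by simp
  have P0: "P \<noteq> 0" using quad_pos[OF z] unfolding P_def by simp
  define m where "m = 2 * c - 1"
  have m: "2 * c + 1 = m + 2" "(n - 5) div 2 = m" using order_eq n unfolding m_def by auto
  have real_n: "real n = 4 * real c + 3" using order_eq by simp
  have q4: "(real n + 1) / 4 = q" unfolding real_n q_def by simp
  have polyp: "poly [:q, 1, 1:] z = P" unfolding P_def quad_def by (simp add: algebra_simps)
  have polyF: "poly char_poly_dr z = u * P ^ m * P ^ 2"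
    unfolding char_poly_dr_def poly_mult poly_power polyp m(1) power_add u_def
    by (simp only: mult.assoc) simp
  define K where "K = (z + 1) * u + q"
  have ag: "res_I z + res_J z = K / (P * u)"
    unfolding res_I_def res_J_def K_def P_def[symmetric] u_def[symmetric] using u0 P0
    by (simp add: field_simps)
  have g: "res_J z = q / (P * u)" unfolding res_J_def P_def u_def ..
  have b: "res_A z = 1 / P" unfolding res_A_def P_def ..
  define cub where "cub = (z + 1) * (z + 1) * u + q * (2 * z + 1)"
  have "K * K - q * u - q * q = u * cub" unfolding K_def cub_def by (simp add: algebra_simps)
  moreover have "u * P ^ 2 * ((res_I z + res_J z) * (res_I z + res_J z) - res_J z * (res_A z + res_J z)) =
      (K * K - q * u - q * q) / u"
    unfolding ag unfolding g b using u0 P0 by (simp add: field_simps power2_eq_square)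
  ultimately have "u * P ^ 2 * ((res_I z + res_J z) * (res_I z + res_J z) - res_J z * (res_A z + res_J z)) =
      cub" using u0 by simp
  also have "cub = poly [: - (real n - 3) / 4, - (real n - 5) / 2, - (real n - 5) / 2, 1 :] z"
    unfolding cub_def u_def real_n deg_def q_def by (simp add: algebra_simps) (simp add: field_simps)
  finally have minor: "u * P ^ 2 * ((res_I z + res_J z) * (res_I z + res_J z) - res_J z * (res_A z + res_J z)) =
      poly [: - (real n - 3) / 4, - (real n - 5) / 2, - (real n - 5) / 2, 1 :] z" .
  show ?thesis
    unfolding minor_char_poly_def polyF poly_mult poly_power q4 m(2) polyp minor[symmetric]
    by (simp add: algebra_simps)
qed

text \<open>Jacobi's identity for the minor of zI - A complementary to {x, y}, evaluated through the
  resolvent.\<close>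

lemma char_poly_principal_submatrix_remove2:
  assumes xy: "x < y" "y < n"
  shows "char_poly (principal_submatrix A ({0..<n} - {x, y})) = minor_char_poly n"
proof -
  obtain N where N: "n = Suc N" using n by (cases n) auto
  obtain N2 where N2: "N = Suc N2" using n N by (cases N) auto
  have AC: "A \<in> carrier_mat (Suc N) (Suc N)" using N by simp
  have A1: "mat_delete A y y \<in> carrier_mat (Suc N2) (Suc N2)"
    using mat_delete_carrier[OF AC, of y y] N2 by simp
  have A2: "mat_delete (mat_delete A y y) x x \<in> carrier_mat N2 N2"
    using mat_delete_carrier[OF A1, of x x] by simp
  have "char_poly (principal_submatrix A ({0..<n} - {x, y})) =
      char_poly (mat_delete (mat_delete A y y) x x)"
    using principal_submatrix_remove2[OF adj_mat_carrier xy] by simp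
  also have "\<dots> = minor_char_poly n"
  proof (rule poly_eq_if_eq_on_Ioi[of deg])
    fix z assume z: "z > deg"
    let ?M = "charmat n z A" and ?R = "resolvent z"
    have "poly (char_poly (mat_delete (mat_delete A y y) x x)) z =
        det (charmat N2 z (mat_delete (mat_delete A y y) x x))"
      by (rule poly_char_poly_eq_det[OF A2])
    also have "charmat N2 z (mat_delete (mat_delete A y y) x x) = mat_delete (mat_delete ?M y y) x x"
      using charmat_mat_delete[OF A1, of x z] charmat_mat_delete[OF AC, of y z] xy N N2 by simp
    also have "det (mat_delete (mat_delete ?M y y) x x) =
        det ?M * (?R $$ (x,x) * ?R $$ (y,y) - ?R $$ (x,y) * ?R $$ (y,x))"
    proof (rule det_mat_delete2_right_inverse)
      show "?M \<in> carrier_mat (Suc N) (Suc N)" "?R \<in> carrier_mat (Suc N) (Suc N)"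
        unfolding N[symmetric] by simp_all
      show "?M * ?R = 1\<^sub>m (Suc N)" using charmat_mult_resolvent[OF z] unfolding N[symmetric] .
      show "x < y" "y < Suc N" using xy N by auto
      show "?R $$ (y,y) \<noteq> 0" using resolvent_diag[of y z] resolvent_diag_pos[OF z] xy by simp
    qed
    also have "?R $$ (x,x) * ?R $$ (y,y) - ?R $$ (x,y) * ?R $$ (y,x) =
        (res_I z + res_J z) * (res_I z + res_J z) - res_J z * (res_A z + res_J z)"
      using resolvent_diag[of x z] resolvent_diag[of y z] resolvent_off_diag[of x y z]
        resolvent_off_diag[of y x z] tournament_converse[OF T, of x y] xy
      by (cases "T x y") (simp_all add: algebra_simps)
    also have "det ?M = poly char_poly_dr z"
      using poly_char_poly_eq_det[of A n z] char_poly_adj_mat by simp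
    finally show "poly (char_poly (mat_delete (mat_delete A y y) x x)) z = poly (minor_char_poly n) z"
      using char_poly_dr_mult_minor[OF z] by simp
  qed
  finally show ?thesis .
qed

end

lemma char_poly_principal_submatrix_doubly_regular:
  assumes n: "n \<ge> 5" and T: "tournament n T" and dr: "doubly_regular n T"
    and I: "I \<subseteq> {0..<n}" "card I = n - 2"
  shows "char_poly (principal_submatrix (adj_mat n T) I) = minor_char_poly n"
proof -
  obtain c where "\<And>x y. x < n \<Longrightarrow> y < n \<Longrightarrow> x \<noteq> y \<Longrightarrow> card {z. z < n \<and> T x z \<and> T y z} = c"
    using dr unfolding doubly_regular_def by blast
  then interpret doubly_regular_tournament n T c using n T by unfold_locales
  obtain x y where xy: "x < y" "y < n" and I_eq: "I = {0..<n} - {x, y}"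
    using subset_card_diff_2_obtain[OF I] n by auto
  show ?thesis unfolding I_eq by (rule char_poly_principal_submatrix_remove2[OF xy])
qed

theorem theorem1p1:
  fixes n :: nat and T :: "nat \<Rightarrow> nat \<Rightarrow> bool"
  assumes "n \<ge> 5" and "tournament n T"
  shows "(spectrally_monomorphic (n - 2) (adj_mat n T) \<longleftrightarrow>
            transitive_tournament n T \<or> doubly_regular n T) \<and>
         (doubly_regular n T \<longrightarrow>
            (\<forall>I. I \<subseteq> {0..<n} \<and> card I = n - 2 \<longrightarrow>
               char_poly (principal_submatrix (adj_mat n T) I) =
                 [: (real n + 1) / 4, 1, 1 :] ^ ((n - 5) div 2) *
                 [: - (real n - 3) / 4, - (real n - 5) / 2, - (real n - 5) / 2, 1 :]))"
proof (intro conjI iffI impI allI)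
  assume "spectrally_monomorphic (n - 2) (adj_mat n T)"
  thus "transitive_tournament n T \<or> doubly_regular n T"
    by (rule transitive_or_doubly_regular_if_spectrally_monomorphic[OF assms])
next
  assume "transitive_tournament n T \<or> doubly_regular n T"
  thus "spectrally_monomorphic (n - 2) (adj_mat n T)"
  proof (elim disjE)
    assume "transitive_tournament n T"
    thus ?thesis unfolding spectrally_monomorphic_def
      using char_poly_principal_submatrix_transitive[OF _ assms(2)] assms(1) by simp
  next
    assume "doubly_regular n T"
    thus ?thesis unfolding spectrally_monomorphic_def
      using char_poly_principal_submatrix_doubly_regular[OF assms] by simp
  qed
next
  fix I assume "doubly_regular n T" "I \<subseteq> {0..<n} \<and> card I = n - 2"
  thus "char_poly (principal_submatrix (adj_mat n T) I) =
      [: (real n + 1) / 4, 1, 1 :] ^ ((n - 5) div 2) *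
      [: - (real n - 3) / 4, - (real n - 5) / 2, - (real n - 5) / 2, 1 :]"
    using char_poly_principal_submatrix_doubly_regular[OF assms] unfolding minor_char_poly_def by blast
qed

end
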